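(* Let $q$ be a prime power and $n\ge k\ge 0$ integers. Let $V_1,\dots,V_\ell$ be subspaces of $\mathbb{F}_q^n$, each of dimension at most $k$. Suppose there exist integers $\delta_1,\dots,\delta_\ell\ge0$ such that $\dim\big(\bigcap_{i\in\Omega}V_i\big)\le k-\sum_{i\in\Omega}\delta_i$ for every nonempty $\Omega\subseteq[\ell]$. Then there exist subspaces $V_i'\supseteq V_i$ of $\mathbb{F}_q^n$ with $\dim V_i'=k-\delta_i$, $i=1,\dots,\ell$, such that $\dim\big(\bigcap_{i\in\Omega}V_i'\big)\le k-\sum_{i\in\Omega}\delta_i$ for every nonempty $\Omega\subseteq[\ell]$. *)

theory Defs
  imports "HOL-Analysis.Analysis"
begin

end

theory Submission
  imports Defs
begin

(* Extend the spaces one vector at a time, by induction on the total deficiency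
   \<Sum>i. k - \<delta> i - dim (V i). Call \<Omega> tight if dim (\<Inter>i\<in>\<Omega>. V i) = k - (\<Sum>i\<in>\<Omega>. \<delta> i).
   By the modular law dim (A + B) + dim (A \<inter> B) = dim A + dim B, tight sets that meet are
   closed under intersection, so for a deficient V i there is a least tight \<Omega>0 containing i,
   and V i + (\<Inter>j\<in>\<Omega>0 - {i}. V j) has dimension at most dim (V i) + \<delta> i < k \<le> n.
   A vector v outside this space lies outside V i + (\<Inter>j\<in>\<Omega> - {i}. V j) for every tight \<Omega>
   containing i, so adding v to V i leaves the intersections over tight sets unchanged and
   raises all other intersections by at most one. *)

context finite_dimensional_vector_space
begin

lemma span_insert_Int_eq:
  assumes A: "subspace A" and W: "subspace W"
    and v: "v \<notin> {a + w |a w. a \<in> A \<and> w \<in> W}"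
  shows "span (insert v A) \<inter> W = A \<inter> W"
proof
  show "A \<inter> W \<subseteq> span (insert v A) \<inter> W"
    using span_superset by blast
  show "span (insert v A) \<inter> W \<subseteq> A \<inter> W"
  proof
    fix x assume x: "x \<in> span (insert v A) \<inter> W"
    then obtain c where c: "x - c *s v \<in> A"
      using span_breakdown_eq A by (metis IntD1 span_eq_iff)
    have "c = 0"
    proof (rule ccontr)
      assume "c \<noteq> 0"
      then have "v = - (inverse c *s (x - c *s v)) + inverse c *s x"
        by (simp add: scale_right_diff_distrib)
      moreover have "- (inverse c *s (x - c *s v)) \<in> A"
        using c A by (simp add: subspace_neg subspace_scale)
      moreover have "inverse c *s x \<in> W"
        using x W by (simp add: subspace_scale)
      ultimately show False
        using v by blast
    qed
    then show "x \<in> A \<inter> W"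
      using c x by simp
  qed
qed

lemma dim_span_insert_Int_le:
  assumes A: "subspace A" and W: "subspace W"
  shows "dim (span (insert v A) \<inter> W) \<le> dim (A \<inter> W) + 1"
proof -
  let ?A' = "span (insert v A)"
  have "{a + w |a w. a \<in> A \<and> w \<in> W} \<subseteq> {a + w |a w. a \<in> ?A' \<and> w \<in> W}"
    using span_superset by blast
  then have "dim {a + w |a w. a \<in> A \<and> w \<in> W} \<le> dim {a + w |a w. a \<in> ?A' \<and> w \<in> W}"
    by (rule dim_subset)
  moreover have "dim ?A' \<le> dim A + 1"
    by (simp add: dim_insert)
  ultimately show ?thesis
    using dim_sums_Int[OF A W] dim_sums_Int[OF subspace_span[of "insert v A"] W] by linarith
qed

end

definition intersections_bounded :: "'i set \<Rightarrow> ('i \<Rightarrow> nat) \<Rightarrow> nat \<Rightarrow> ('i \<Rightarrow> ('a::field ^ 'n) set) \<Rightarrow> bool"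
  where "intersections_bounded I \<delta> k V \<longleftrightarrow>
    (\<forall>\<Omega>. \<Omega> \<subseteq> I \<and> \<Omega> \<noteq> {} \<longrightarrow> int (vec.dim (\<Inter>i\<in>\<Omega>. V i)) \<le> int k - (\<Sum>i\<in>\<Omega>. int (\<delta> i)))"

definition tight :: "'i set \<Rightarrow> ('i \<Rightarrow> nat) \<Rightarrow> nat \<Rightarrow> ('i \<Rightarrow> ('a::field ^ 'n) set) \<Rightarrow> 'i set \<Rightarrow> bool"
  where "tight I \<delta> k V \<Omega> \<longleftrightarrow>
    \<Omega> \<subseteq> I \<and> \<Omega> \<noteq> {} \<and> int (vec.dim (\<Inter>i\<in>\<Omega>. V i)) = int k - (\<Sum>i\<in>\<Omega>. int (\<delta> i))"

lemma intersections_boundedD: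
  fixes V :: "'i \<Rightarrow> ('a::field ^ 'n) set"
  shows "intersections_bounded I \<delta> k V \<Longrightarrow> \<Omega> \<subseteq> I \<Longrightarrow> \<Omega> \<noteq> {} \<Longrightarrow>
    int (vec.dim (\<Inter>i\<in>\<Omega>. V i)) \<le> int k - (\<Sum>i\<in>\<Omega>. int (\<delta> i))"
  unfolding intersections_bounded_def by blast

lemma intersections_bounded_singleton:
  fixes V :: "'i \<Rightarrow> ('a::field ^ 'n) set"
  shows "intersections_bounded I \<delta> k V \<Longrightarrow> i \<in> I \<Longrightarrow> int (vec.dim (V i)) \<le> int k - int (\<delta> i)"
  using intersections_boundedD[of I \<delta> k V "{i}"] by simp

lemma tight_Int:
  fixes V :: "'i \<Rightarrow> ('a::field ^ 'n) set"
  assumes "finite I" and sub: "\<forall>i\<in>I. vec.subspace (V i)" and bounded: "intersections_bounded I \<delta> k V"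
    and tight1: "tight I \<delta> k V \<Omega>1" and tight2: "tight I \<delta> k V \<Omega>2" and meet: "\<Omega>1 \<inter> \<Omega>2 \<noteq> {}"
  shows "tight I \<delta> k V (\<Omega>1 \<inter> \<Omega>2)"
proof -
  let ?A = "\<Inter>i\<in>\<Omega>1. V i" and ?B = "\<Inter>i\<in>\<Omega>2. V i" and ?C = "\<Inter>i\<in>\<Omega>1 \<inter> \<Omega>2. V i"
  have I1: "\<Omega>1 \<subseteq> I" and I2: "\<Omega>2 \<subseteq> I"
    using tight1 tight2 by (auto simp: tight_def)
  then have fin1: "finite \<Omega>1" and fin2: "finite \<Omega>2"
    using \<open>finite I\<close> finite_subset by auto
  have sA: "vec.subspace ?A" and sB: "vec.subspace ?B" and sC: "vec.subspace ?C"
    by (rule vec.subspace_Int; use sub I1 I2 in blast)+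
  have "?A \<subseteq> ?C" "?B \<subseteq> ?C"
    by auto
  then have "{a + b |a b. a \<in> ?A \<and> b \<in> ?B} \<subseteq> ?C"
    using vec.subspace_add[OF sC] by auto
  then have "vec.dim {a + b |a b. a \<in> ?A \<and> b \<in> ?B} \<le> vec.dim ?C"
    by (rule vec.dim_subset)
  moreover have "int (vec.dim (?A \<inter> ?B)) \<le> int k - (\<Sum>i\<in>\<Omega>1 \<union> \<Omega>2. int (\<delta> i))"
    using intersections_boundedD[OF bounded, of "\<Omega>1 \<union> \<Omega>2"] I1 I2 meet by (auto simp: INT_Un)
  moreover have "int (vec.dim ?C) \<le> int k - (\<Sum>i\<in>\<Omega>1 \<inter> \<Omega>2. int (\<delta> i))"
    by (rule intersections_boundedD[OF bounded]) (use I1 meet in auto)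
  moreover have "int (vec.dim ?A) = int k - (\<Sum>i\<in>\<Omega>1. int (\<delta> i))"
    and "int (vec.dim ?B) = int k - (\<Sum>i\<in>\<Omega>2. int (\<delta> i))"
    using tight1 tight2 by (simp_all add: tight_def)
  ultimately have "int (vec.dim ?C) = int k - (\<Sum>i\<in>\<Omega>1 \<inter> \<Omega>2. int (\<delta> i))"
    using vec.dim_sums_Int[OF sA sB] sum.union_inter[OF fin1 fin2, of "\<lambda>i. int (\<delta> i)"]
    by linarith
  then show ?thesis
    using I1 meet by (auto simp: tight_def)
qed

lemma least_tight_containing:
  fixes V :: "'i \<Rightarrow> ('a::field ^ 'n) set"
  assumes "finite I" and "\<forall>i\<in>I. vec.subspace (V i)" and "intersections_bounded I \<delta> k V"
    and "tight I \<delta> k V \<Omega>1" and "i \<in> \<Omega>1"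
  obtains \<Omega>0 where "tight I \<delta> k V \<Omega>0" "i \<in> \<Omega>0" "\<And>\<Omega>. tight I \<delta> k V \<Omega> \<Longrightarrow> i \<in> \<Omega> \<Longrightarrow> \<Omega>0 \<subseteq> \<Omega>"
proof -
  obtain \<Omega>0 where tight0: "tight I \<delta> k V \<Omega>0" "i \<in> \<Omega>0"
    and least: "\<And>\<Omega>. tight I \<delta> k V \<Omega> \<and> i \<in> \<Omega> \<Longrightarrow> card \<Omega>0 \<le> card \<Omega>"
    using ex_has_least_nat[of "\<lambda>\<Omega>. tight I \<delta> k V \<Omega> \<and> i \<in> \<Omega>" \<Omega>1 card] assms(4,5) by blast
  have "\<Omega>0 \<subseteq> \<Omega>" if "tight I \<delta> k V \<Omega>" "i \<in> \<Omega>" for \<Omega>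
  proof -
    have "tight I \<delta> k V (\<Omega> \<inter> \<Omega>0)"
      using tight_Int[OF assms(1-3) that(1) tight0(1)] that(2) tight0(2) by blast
    then have "card \<Omega>0 \<le> card (\<Omega> \<inter> \<Omega>0)"
      using least that(2) tight0(2) by blast
    moreover have "finite \<Omega>0"
      using tight0(1) \<open>finite I\<close> finite_subset unfolding tight_def by blast
    ultimately show ?thesis
      by (metis card_seteq inf_le2 le_infE)
  qed
  with tight0 that show ?thesis
    by blast
qed

lemma dim_sums_Inter_tight_le:
  fixes V :: "'i \<Rightarrow> ('a::field ^ 'n) set"
  assumes "finite I" and sub: "\<forall>i\<in>I. vec.subspace (V i)" and bounded: "intersections_bounded I \<delta> k V"
    and tight: "tight I \<delta> k V \<Omega>" and "i \<in> \<Omega>" and "\<Omega> - {i} \<noteq> {}"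
  shows "vec.dim {a + w |a w. a \<in> V i \<and> w \<in> (\<Inter>j\<in>\<Omega> - {i}. V j)} \<le> vec.dim (V i) + \<delta> i"
proof -
  let ?W = "\<Inter>j\<in>\<Omega> - {i}. V j"
  have "\<Omega> \<subseteq> I" and dim_tight: "int (vec.dim (\<Inter>j\<in>\<Omega>. V j)) = int k - (\<Sum>j\<in>\<Omega>. int (\<delta> j))"
    using tight by (simp_all add: tight_def)
  have Vi: "vec.subspace (V i)" and sW: "vec.subspace ?W"
    using sub \<open>\<Omega> \<subseteq> I\<close> \<open>i \<in> \<Omega>\<close> by (auto intro: vec.subspace_Int)
  have meet: "V i \<inter> ?W = (\<Inter>j\<in>\<Omega>. V j)"
    using \<open>i \<in> \<Omega>\<close> by auto
  have "int (vec.dim ?W) \<le> int k - (\<Sum>j\<in>\<Omega> - {i}. int (\<delta> j))"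
    by (rule intersections_boundedD[OF bounded]) (use \<open>\<Omega> \<subseteq> I\<close> \<open>\<Omega> - {i} \<noteq> {}\<close> in auto)
  moreover have "vec.dim {a + w |a w. a \<in> V i \<and> w \<in> ?W} + vec.dim (\<Inter>j\<in>\<Omega>. V j) = vec.dim (V i) + vec.dim ?W"
    using vec.dim_sums_Int[OF Vi sW] unfolding meet .
  moreover have "(\<Sum>j\<in>\<Omega>. int (\<delta> j)) = int (\<delta> i) + (\<Sum>j\<in>\<Omega> - {i}. int (\<delta> j))"
    using sum.remove[OF finite_subset[OF \<open>\<Omega> \<subseteq> I\<close> \<open>finite I\<close>] \<open>i \<in> \<Omega>\<close>] .
  ultimately show ?thesis
    using dim_tight by linarith
qed

lemma small_subspace_containing_tight_sums:
  fixes V :: "'i \<Rightarrow> ('a::field ^ 'n) set"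
  assumes "finite I" and sub: "\<forall>i\<in>I. vec.subspace (V i)" and "intersections_bounded I \<delta> k V"
    and deficient: "int (vec.dim (V i)) < int k - int (\<delta> i)"
  obtains S where "V i \<subseteq> S" "vec.dim S < k"
    "\<And>\<Omega>. tight I \<delta> k V \<Omega> \<Longrightarrow> i \<in> \<Omega> \<Longrightarrow> {a + w |a w. a \<in> V i \<and> w \<in> (\<Inter>j\<in>\<Omega> - {i}. V j)} \<subseteq> S"
proof (cases "\<exists>\<Omega>. tight I \<delta> k V \<Omega> \<and> i \<in> \<Omega>")
  case False
  show ?thesis
  proof (rule that[of "V i"])
    show "vec.dim (V i) < k"
      using deficient by linarith
  qed (use False in auto)
next
  case True
  then obtain \<Omega>0 where tight0: "tight I \<delta> k V \<Omega>0" "i \<in> \<Omega>0"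
    and least: "\<And>\<Omega>. tight I \<delta> k V \<Omega> \<Longrightarrow> i \<in> \<Omega> \<Longrightarrow> \<Omega>0 \<subseteq> \<Omega>"
    using least_tight_containing[OF assms(1-3)] by blast
  let ?W0 = "\<Inter>j\<in>\<Omega>0 - {i}. V j"
  have sW0: "vec.subspace ?W0"
    by (rule vec.subspace_Int) (use sub tight0(1) in \<open>auto simp: tight_def\<close>)
  have "\<Omega>0 - {i} \<noteq> {}"
  proof
    assume "\<Omega>0 - {i} = {}"
    then have "\<Omega>0 = {i}"
      using tight0(2) by blast
    then show False
      using tight0(1) deficient by (simp add: tight_def)
  qed
  show ?thesis
  proof (rule that)
    show "V i \<subseteq> {a + w |a w. a \<in> V i \<and> w \<in> ?W0}"
      using vec.subspace_0[OF sW0] by force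
    show "vec.dim {a + w |a w. a \<in> V i \<and> w \<in> ?W0} < k"
      using dim_sums_Inter_tight_le[OF assms(1-3) tight0 \<open>\<Omega>0 - {i} \<noteq> {}\<close>] deficient by linarith
    fix \<Omega> assume "tight I \<delta> k V \<Omega>" "i \<in> \<Omega>"
    then have "(\<Inter>j\<in>\<Omega> - {i}. V j) \<subseteq> ?W0"
      using least by blast
    then show "{a + w |a w. a \<in> V i \<and> w \<in> (\<Inter>j\<in>\<Omega> - {i}. V j)} \<subseteq> {a + w |a w. a \<in> V i \<and> w \<in> ?W0}"
      by auto
  qed
qed

lemma intersections_bounded_span_insert_avoiding:
  fixes V :: "'i \<Rightarrow> ('a::field ^ 'n) set"
  assumes sub: "\<forall>i\<in>I. vec.subspace (V i)" and bounded: "intersections_bounded I \<delta> k V" and "i \<in> I"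
    and avoids: "\<And>\<Omega>. tight I \<delta> k V \<Omega> \<Longrightarrow> i \<in> \<Omega> \<Longrightarrow> v \<notin> {a + w |a w. a \<in> V i \<and> w \<in> (\<Inter>j\<in>\<Omega> - {i}. V j)}"
  shows "intersections_bounded I \<delta> k (V(i := vec.span (insert v (V i))))"
  unfolding intersections_bounded_def
proof (intro allI impI, elim conjE)
  let ?V' = "V(i := vec.span (insert v (V i)))"
  fix \<Omega> assume \<Omega>: "\<Omega> \<subseteq> I" "\<Omega> \<noteq> {}"
  show "int (vec.dim (\<Inter>j\<in>\<Omega>. ?V' j)) \<le> int k - (\<Sum>j\<in>\<Omega>. int (\<delta> j))"
  proof (cases "i \<in> \<Omega>")
    case False
    then have "(\<Inter>j\<in>\<Omega>. ?V' j) = (\<Inter>j\<in>\<Omega>. V j)"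
      by auto
    then show ?thesis
      using intersections_boundedD[OF bounded \<Omega>] by simp
  next
    case True
    let ?W = "\<Inter>j\<in>\<Omega> - {i}. V j"
    have Vi: "vec.subspace (V i)" and sW: "vec.subspace ?W"
      using sub \<open>i \<in> I\<close> \<Omega> by (auto intro!: vec.subspace_Int)
    have new: "(\<Inter>j\<in>\<Omega>. ?V' j) = vec.span (insert v (V i)) \<inter> ?W"
      and old: "(\<Inter>j\<in>\<Omega>. V j) = V i \<inter> ?W"
      using True by auto
    show ?thesis
    proof (cases "tight I \<delta> k V \<Omega>")
      case True
      then show ?thesis
        using new old vec.span_insert_Int_eq[OF Vi sW avoids[OF True \<open>i \<in> \<Omega>\<close>]]
          intersections_boundedD[OF bounded \<Omega>] by simp
    next
      case False
      then have "int (vec.dim (V i \<inter> ?W)) < int k - (\<Sum>j\<in>\<Omega>. int (\<delta> j))"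
        using intersections_boundedD[OF bounded \<Omega>] old \<Omega> unfolding tight_def by auto
      then show ?thesis
        unfolding new using vec.dim_span_insert_Int_le[OF Vi sW, of v] by linarith
    qed
  qed
qed

lemma intersections_bounded_span_insert:
  fixes V :: "'i \<Rightarrow> ('a::field ^ 'n) set"
  assumes "finite I" and sub: "\<forall>i\<in>I. vec.subspace (V i)" and bounded: "intersections_bounded I \<delta> k V"
    and "k \<le> CARD('n)" and "i \<in> I" and "int (vec.dim (V i)) < int k - int (\<delta> i)"
  obtains v where "v \<notin> V i" "intersections_bounded I \<delta> k (V(i := vec.span (insert v (V i))))"
proof -
  obtain S where S: "V i \<subseteq> S" "vec.dim S < k"
    "\<And>\<Omega>. tight I \<delta> k V \<Omega> \<Longrightarrow> i \<in> \<Omega> \<Longrightarrow> {a + w |a w. a \<in> V i \<and> w \<in> (\<Inter>j\<in>\<Omega> - {i}. V j)} \<subseteq> S"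
    using small_subspace_containing_tight_sums[OF assms(1-3,6)] by blast
  have "S \<noteq> UNIV"
    using S(2) \<open>k \<le> CARD('n)\<close> by (auto simp: card_cart_basis)
  then obtain v where "v \<notin> S"
    by blast
  show thesis
  proof (rule that)
    show "v \<notin> V i"
      using S(1) \<open>v \<notin> S\<close> by blast
    show "intersections_bounded I \<delta> k (V(i := vec.span (insert v (V i))))"
      using intersections_bounded_span_insert_avoiding[OF sub bounded \<open>i \<in> I\<close>] S(3) \<open>v \<notin> S\<close> by blast
  qed
qed

lemma intersections_bounded_extension:
  fixes V :: "'i \<Rightarrow> ('a::field ^ 'n) set"
  assumes "finite I" and "k \<le> CARD('n)"
    and "\<forall>i\<in>I. vec.subspace (V i)" and "intersections_bounded I \<delta> k V"
  shows "\<exists>V'. (\<forall>i\<in>I. vec.subspace (V' i) \<and> V i \<subseteq> V' i \<and> int (vec.dim (V' i)) = int k - int (\<delta> i))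
           \<and> intersections_bounded I \<delta> k V'"
  using assms(3,4)
proof (induction "\<Sum>i\<in>I. k - \<delta> i - vec.dim (V i)" arbitrary: V rule: less_induct)
  case (less V)
  note sub = less.prems(1) and bounded = less.prems(2)
  show ?case
  proof (cases "\<forall>i\<in>I. int (vec.dim (V i)) = int k - int (\<delta> i)")
    case True
    then show ?thesis
      using sub bounded by blast
  next
    case False
    then obtain i where "i \<in> I" and deficient: "int (vec.dim (V i)) < int k - int (\<delta> i)"
      using intersections_bounded_singleton[OF bounded] by force
    then obtain v where "v \<notin> V i" and bounded1: "intersections_bounded I \<delta> k (V(i := vec.span (insert v (V i))))"
      using intersections_bounded_span_insert[OF \<open>finite I\<close> sub bounded \<open>k \<le> CARD('n)\<close>] by blast
    define V1 where "V1 = V(i := vec.span (insert v (V i)))"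
    have "vec.subspace (V i)"
      using sub \<open>i \<in> I\<close> by blast
    then have "vec.dim (V1 i) = vec.dim (V i) + 1"
      unfolding V1_def using \<open>v \<notin> V i\<close> by (simp add: vec.dim_insert vec.span_eq_iff[THEN iffD2])
    then have "(\<Sum>j\<in>I. k - \<delta> j - vec.dim (V1 j)) < (\<Sum>j\<in>I. k - \<delta> j - vec.dim (V j))"
      using \<open>finite I\<close> \<open>i \<in> I\<close> deficient by (intro sum_strict_mono_ex1) (auto simp: V1_def)
    moreover have "\<forall>j\<in>I. vec.subspace (V1 j)"
      using sub by (simp add: V1_def)
    ultimately obtain V' where V': "\<forall>j\<in>I. vec.subspace (V' j) \<and> V1 j \<subseteq> V' j \<and> int (vec.dim (V' j)) = int k - int (\<delta> j)"
      "intersections_bounded I \<delta> k V'"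
      using less.hyps bounded1 unfolding V1_def by blast
    moreover have "V j \<subseteq> V1 j" for j
      unfolding V1_def using vec.span_superset[of "insert v (V i)"] by auto
    ultimately show ?thesis
      by blast
  qed
qed

theorem mainTheorem12:
  fixes V :: "nat \<Rightarrow> ('a::{finite,field} ^ 'n) set"
    and \<delta> :: "nat \<Rightarrow> nat"
    and k l :: nat
  assumes "k \<le> CARD('n)"
    and "\<forall>i\<in>{1..l}. vec.subspace (V i) \<and> vec.dim (V i) \<le> k"
    and "\<forall>\<Omega>. \<Omega> \<subseteq> {1..l} \<and> \<Omega> \<noteq> {} \<longrightarrow>
           int (vec.dim (\<Inter>i\<in>\<Omega>. V i)) \<le> int k - (\<Sum>i\<in>\<Omega>. int (\<delta> i))"
  shows "\<exists>V' :: nat \<Rightarrow> ('a ^ 'n) set.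
           (\<forall>i\<in>{1..l}. vec.subspace (V' i) \<and> V i \<subseteq> V' i
               \<and> int (vec.dim (V' i)) = int k - int (\<delta> i))
         \<and> (\<forall>\<Omega>. \<Omega> \<subseteq> {1..l} \<and> \<Omega> \<noteq> {} \<longrightarrow>
               int (vec.dim (\<Inter>i\<in>\<Omega>. V' i)) \<le> int k - (\<Sum>i\<in>\<Omega>. int (\<delta> i)))"
proof -
  (* the hypothesis dim (V i) \<le> k is the case \<Omega> = {i} of the intersection bound *)
  have "intersections_bounded {1..l} \<delta> k V"
    using assms(3) unfolding intersections_bounded_def by blast
  then show ?thesis
    using intersections_bounded_extension[of "{1..l}" k V \<delta>] assms(1,2)
    unfolding intersections_bounded_def by auto
qed

end
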